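(* Let $k$ be a perfect field of characteristic $p>0$, let $R$ be an $\mathbb N$-graded domain of finite type over $R_0=k$, and let $x\in R$ be a homogeneous element of positive degree. If $R[1/x]$ is finitely generated as a $D_R$-module, then $D_R$ has nonzero elements of negative degree.
   Context: $D_R=D_{R/k}$ is the ring of $k$-linear differential operators on $R$; since $k$ is perfect and $R$ is $F$-finite, $D_R=\bigcup_{e\ge 0}\operatorname{Hom}_{R^{p^e}}(R,R)$, where $R^{p^e}$ is the subring of $p^e$-th powers. $D_R$ is graded: $\delta$ has degree $a$ if $\delta(R_j)\subset R_{j+a}$ for all $j$. The $D_R$-module structure on $R[1/x]$ is given as follows: for $\delta\in\operatorname{Hom}_{R^{p^e}}(R,R)$, $r\in R$ and $n\le p^e$, $\delta(r/x^n)=\delta(rx^{p^e-n})/x^{p^e}$. *)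

theory Defs
  imports Main "HOL-Computational_Algebra.Primes"
begin

text \<open>The graded ring R is the type 'a (an integral domain).  The grading is a family
  G :: nat \<Rightarrow> 'a set of homogeneous components; k = R_0 = G 0.\<close>

definition graded_ring :: "(nat \<Rightarrow> 'a::idom set) \<Rightarrow> bool" where
  "graded_ring G \<longleftrightarrow>
     (\<forall>n. 0 \<in> G n \<and> (\<forall>a\<in>G n. \<forall>b\<in>G n. a + b \<in> G n \<and> - a \<in> G n)) \<and>
     (\<forall>i j. \<forall>a\<in>G i. \<forall>b\<in>G j. a * b \<in> G (i + j)) \<and>
     (\<forall>r. \<exists>!c :: nat \<Rightarrow> 'a. finite {n. c n \<noteq> 0} \<and> (\<forall>n. c n \<in> G n) \<and>
            r = (\<Sum>n\<in>{n. c n \<noteq> 0}. c n))"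

inductive_set gen_alg :: "'a::idom set \<Rightarrow> 'a set" for A where
  base: "a \<in> A \<Longrightarrow> a \<in> gen_alg A"
| add: "a \<in> gen_alg A \<Longrightarrow> b \<in> gen_alg A \<Longrightarrow> a + b \<in> gen_alg A"
| mult: "a \<in> gen_alg A \<Longrightarrow> b \<in> gen_alg A \<Longrightarrow> a * b \<in> gen_alg A"

definition finite_type_over_R0 :: "(nat \<Rightarrow> 'a::idom set) \<Rightarrow> bool" where
  "finite_type_over_R0 G \<longleftrightarrow> (\<exists>S. finite S \<and> gen_alg (G 0 \<union> S) = UNIV)"

definition perfect_field_R0 :: "nat \<Rightarrow> (nat \<Rightarrow> 'a::idom set) \<Rightarrow> bool" where
  "perfect_field_R0 p G \<longleftrightarrow>
     (\<forall>a\<in>G 0. a \<noteq> 0 \<longrightarrow> (\<exists>b\<in>G 0. a * b = 1)) \<and>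
     (\<forall>a\<in>G 0. \<exists>b\<in>G 0. b ^ p = a)"

text \<open>Hom_{R^{p^e}}(R,R): additive maps linear over the subring of p^e-th powers.\<close>
definition diffop_level :: "nat \<Rightarrow> nat \<Rightarrow> ('a::idom \<Rightarrow> 'a) set" where
  "diffop_level p e = {\<delta>. (\<forall>a b. \<delta> (a + b) = \<delta> a + \<delta> b) \<and>
                          (\<forall>r s. \<delta> (r ^ (p ^ e) * s) = r ^ (p ^ e) * \<delta> s)}"

definition diffops :: "nat \<Rightarrow> ('a::idom \<Rightarrow> 'a) set" where
  "diffops p = (\<Union>e. diffop_level p e)"

definition Gz :: "(nat \<Rightarrow> 'a::idom set) \<Rightarrow> int \<Rightarrow> 'a set" where
  "Gz G n = (if n < 0 then {0} else G (nat n))"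

definition op_has_degree :: "(nat \<Rightarrow> 'a::idom set) \<Rightarrow> ('a \<Rightarrow> 'a) \<Rightarrow> int \<Rightarrow> bool" where
  "op_has_degree G \<delta> a \<longleftrightarrow> (\<forall>j. \<forall>r\<in>G j. \<delta> r \<in> Gz G (int j + a))"

text \<open>Elements of R[1/x] are represented by pairs (r,n) standing for r/x^n.\<close>
definition loc_eq :: "'a::idom \<Rightarrow> 'a \<times> nat \<Rightarrow> 'a \<times> nat \<Rightarrow> bool" where
  "loc_eq x u v \<longleftrightarrow> fst u * x ^ snd v = fst v * x ^ snd u"

text \<open>R[1/x] is finitely generated as a D_R-module: there are finitely many generators
  g_i = r_i/x^{n_i} such that every element equals \<Sum>_i \<delta>_i(g_i) with \<delta>_i \<in> D_R.
  Any finitely many operators lie in a common level e (levels increase), where we may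
  also take n_i \<le> p^e; then \<delta>_i(r_i/x^{n_i}) = \<delta>_i(r_i x^{p^e - n_i}) / x^{p^e}.\<close>
definition loc_fg_Dmodule :: "nat \<Rightarrow> 'a::idom \<Rightarrow> bool" where
  "loc_fg_Dmodule p x \<longleftrightarrow>
     (\<exists>gens :: ('a \<times> nat) list. \<forall>m :: 'a \<times> nat.
        \<exists>e ds. length ds = length gens \<and>
          (\<forall>i<length gens. ds ! i \<in> diffop_level p e \<and> snd (gens ! i) \<le> p ^ e) \<and>
          loc_eq x m ((\<Sum>i<length gens. (ds ! i) (fst (gens ! i) * x ^ (p ^ e - snd (gens ! i)))),
                      p ^ e))"

end

theory Submission
  imports Defs "HOL.Modules"
begin

text \<open>Suppose no nonzero operator of D_R has negative degree. Then the degree-a part of any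
  \<delta> \<in> D_R, which is again in D_R because the Frobenius sends homogeneous decompositions to
  homogeneous decompositions, vanishes for a < 0; hence no \<delta> \<in> D_R can create homogeneous
  components of degree below the lowest one of its argument. Now write
  1/x^N = \<Sum> \<delta>_i(r_i x^(q - n_i))/x^q with q = p^e and N > M = \<Sum> n_i. Clearing
  denominators, x^q = S x^N where S has no components below (q - M) deg x, so S x^N has no
  component in degree q deg x < (q - M + N) deg x, whereas x^q is nonzero and lives there.\<close>

lemma graded_ring_zero: "graded_ring G \<Longrightarrow> 0 \<in> G n"
  unfolding graded_ring_def by blast

lemma graded_ring_add: "graded_ring G \<Longrightarrow> a \<in> G n \<Longrightarrow> b \<in> G n \<Longrightarrow> a + b \<in> G n"
  unfolding graded_ring_def by blast

lemma graded_ring_mult: "graded_ring G \<Longrightarrow> a \<in> G i \<Longrightarrow> b \<in> G j \<Longrightarrow> a * b \<in> G (i + j)"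
  unfolding graded_ring_def by blast

lemma graded_ring_sum: "graded_ring G \<Longrightarrow> (\<And>i. i \<in> A \<Longrightarrow> f i \<in> G n) \<Longrightarrow> sum f A \<in> G n"
  by (induction A rule: infinite_finite_induct) (auto intro: graded_ring_zero graded_ring_add)

lemma graded_ring_power:
  assumes gr: "graded_ring G" and u: "u \<in> G m" and k: "k > 0"
  shows "u ^ k \<in> G (k * m)"
  using k
proof (induction k rule: nat_induct_non_zero)
  case (Suc k)
  from graded_ring_mult[OF gr u Suc.IH] show ?case by simp
qed (use u in simp)

definition homog_comp :: "(nat \<Rightarrow> 'a::idom set) \<Rightarrow> nat \<Rightarrow> 'a \<Rightarrow> 'a" where
  "homog_comp G n r = (THE c. finite {n. c n \<noteq> 0} \<and> (\<forall>n. c n \<in> G n) \<and>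
      r = (\<Sum>n\<in>{n. c n \<noteq> 0}. c n)) n"

definition homog_support :: "(nat \<Rightarrow> 'a::idom set) \<Rightarrow> 'a \<Rightarrow> nat set" where
  "homog_support G r = {n. homog_comp G n r \<noteq> 0}"

lemma homog_comp_eqI:
  assumes gr: "graded_ring G" and c: "finite {n. c n \<noteq> 0}" "\<forall>n. c n \<in> G n"
    "r = (\<Sum>n\<in>{n. c n \<noteq> 0}. c n)"
  shows "homog_comp G m r = c m"
proof -
  have "\<exists>!c :: nat \<Rightarrow> 'a. finite {n. c n \<noteq> 0} \<and> (\<forall>n. c n \<in> G n) \<and>
          r = (\<Sum>n\<in>{n. c n \<noteq> 0}. c n)"
    using gr unfolding graded_ring_def by blast
  then have "(THE c. finite {n. c n \<noteq> 0} \<and> (\<forall>n. c n \<in> G n) \<and>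
      r = (\<Sum>n\<in>{n. c n \<noteq> 0}. c n)) = c"
    by (rule the1_equality) (use c in auto)
  then show ?thesis unfolding homog_comp_def by simp
qed

lemma homog_decomposition:
  assumes gr: "graded_ring G"
  shows finite_homog_support: "finite (homog_support G r)"
    and homog_comp_in: "homog_comp G n r \<in> G n"
    and sum_homog_support: "(\<Sum>n\<in>homog_support G r. homog_comp G n r) = r"
proof -
  obtain c :: "nat \<Rightarrow> 'a" where c: "finite {n. c n \<noteq> 0}" "\<forall>n. c n \<in> G n"
    "r = (\<Sum>n\<in>{n. c n \<noteq> 0}. c n)"
    using gr unfolding graded_ring_def by blast
  have "homog_comp G k r = c k" for k
    using homog_comp_eqI[OF gr c] .
  then show "finite (homog_support G r)" "homog_comp G n r \<in> G n"
    "(\<Sum>n\<in>homog_support G r. homog_comp G n r) = r"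
    using c by (simp_all add: homog_support_def)
qed

lemma sum_homog_superset:
  assumes gr: "graded_ring G" and "finite A" "homog_support G r \<subseteq> A"
  shows "(\<Sum>n\<in>A. homog_comp G n r) = r"
  using sum.mono_neutral_left[OF assms(2,3), of "\<lambda>n. homog_comp G n r"] sum_homog_support[OF gr]
  by (simp add: homog_support_def)

lemma homog_comp_sum_homogeneous:
  assumes gr: "graded_ring G" and fin: "finite A" and c: "\<And>i. i \<in> A \<Longrightarrow> c i \<in> G (f i)"
  shows "homog_comp G m (\<Sum>i\<in>A. c i) = (\<Sum>i\<in>{i\<in>A. f i = m}. c i)"
proof -
  define c' where "c' n = (\<Sum>i\<in>{i\<in>A. f i = n}. c i)" for n
  have c'_in: "\<forall>n. c' n \<in> G n"
    unfolding c'_def using c by (auto intro!: graded_ring_sum[OF gr])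
  have supp: "{n. c' n \<noteq> 0} \<subseteq> f ` A"
    unfolding c'_def by (force intro: sum.neutral)
  have "(\<Sum>i\<in>A. c i) = (\<Sum>n\<in>f ` A. c' n)"
    unfolding c'_def by (rule sum.image_gen[OF fin])
  also have "\<dots> = (\<Sum>n\<in>{n. c' n \<noteq> 0}. c' n)"
    by (rule sum.mono_neutral_right) (use fin supp in auto)
  finally show ?thesis
    using homog_comp_eqI[OF gr finite_subset[OF supp] c'_in] fin unfolding c'_def by blast
qed

lemma homog_comp_homogeneous:
  assumes gr: "graded_ring G" and "r \<in> G j"
  shows "homog_comp G n r = (if n = j then r else 0)"
  using homog_comp_sum_homogeneous[OF gr, of "{()}" "\<lambda>_. r" "\<lambda>_. j" n] assms by auto

lemma additive_homog_comp:
  assumes gr: "graded_ring G"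
  shows "additive (homog_comp G m)"
proof
  fix r s
  define A where "A = homog_support G r \<union> homog_support G s"
  have fin: "finite A"
    unfolding A_def using finite_homog_support[OF gr] by blast
  have "r + s = (\<Sum>n\<in>A. homog_comp G n r + homog_comp G n s)"
    using sum_homog_superset[OF gr fin] unfolding A_def by (simp add: sum.distrib)
  then have "homog_comp G m (r + s) = (\<Sum>n\<in>{n\<in>A. n = m}. homog_comp G n r + homog_comp G n s)"
    using homog_comp_sum_homogeneous[OF gr fin, of _ id]
    by (simp add: graded_ring_add[OF gr] homog_comp_in[OF gr])
  also have "\<dots> = homog_comp G m r + homog_comp G m s"
  proof (cases "m \<in> A")
    case True
    then have "{n\<in>A. n = m} = {m}" by auto
    then show ?thesis by simp
  next
    case False
    then have "{n\<in>A. n = m} = {}" by auto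
    then show ?thesis using False by (simp add: A_def homog_support_def)
  qed
  finally show "homog_comp G m (r + s) = homog_comp G m r + homog_comp G m s" .
qed

lemma homog_comp_mult_homogeneous:
  assumes gr: "graded_ring G" and w: "w \<in> G k"
  shows "homog_comp G m (w * z) = (if k \<le> m then w * homog_comp G (m - k) z else 0)"
proof -
  define A where "A = homog_support G z"
  have fin: "finite A"
    unfolding A_def using finite_homog_support[OF gr] .
  have "w * z = (\<Sum>n\<in>A. w * homog_comp G n z)"
    unfolding A_def by (simp add: sum_homog_support[OF gr] flip: sum_distrib_left)
  then have "homog_comp G m (w * z) = (\<Sum>n\<in>{n\<in>A. k + n = m}. w * homog_comp G n z)"
    using homog_comp_sum_homogeneous[OF gr fin, of _ "(+) k"]
    by (simp add: graded_ring_mult[OF gr w] homog_comp_in[OF gr])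
  also have "\<dots> = (if k \<le> m then w * homog_comp G (m - k) z else 0)"
  proof (cases "k \<le> m \<and> m - k \<in> A")
    case True
    then have "{n\<in>A. k + n = m} = {m - k}" by auto
    then show ?thesis using True by simp
  next
    case False
    then have empty: "{n\<in>A. k + n = m} = {}" by auto
    have "k \<le> m \<Longrightarrow> homog_comp G (m - k) z = 0"
      using False by (simp add: A_def homog_support_def)
    then show ?thesis unfolding empty by simp
  qed
  finally show ?thesis .
qed

definition homog_compz :: "(nat \<Rightarrow> 'a::idom set) \<Rightarrow> int \<Rightarrow> 'a \<Rightarrow> 'a" where
  "homog_compz G k r = (if k < 0 then 0 else homog_comp G (nat k) r)"

lemma homog_compz_in: "graded_ring G \<Longrightarrow> homog_compz G k r \<in> Gz G k"
  unfolding homog_compz_def Gz_def using homog_comp_in by auto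

lemma additive_homog_compz: "graded_ring G \<Longrightarrow> additive (homog_compz G k)"
  unfolding homog_compz_def by unfold_locales (simp add: additive.add[OF additive_homog_comp])

lemma homog_compz_mult_homogeneous:
  assumes gr: "graded_ring G" and w: "w \<in> G k"
  shows "homog_compz G (int k + i) (w * z) = w * homog_compz G i z"
proof (cases "i < 0")
  case False
  then have "nat (int k + i) = k + nat i" by simp
  then show ?thesis
    unfolding homog_compz_def using homog_comp_mult_homogeneous[OF gr w] False by auto
qed (auto simp: homog_compz_def homog_comp_mult_homogeneous[OF gr w])

lemma CHAR_eq_prime:
  assumes "prime p" "of_nat p = (0::'a::idom)"
  shows "CHAR('a) = p"
proof -
  have "CHAR('a) dvd p"
    using assms(2) of_nat_eq_0_iff_char_dvd by blast
  moreover have "CHAR('a) \<noteq> 1"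
    using of_nat_eq_0_iff_char_dvd[of 1, where 'a='a] by auto
  ultimately show ?thesis using assms(1) prime_nat_iff by blast
qed

lemma power_prime_power_sum:
  assumes "prime p" "of_nat p = (0::'a::idom)"
  shows "(sum (f :: 'b \<Rightarrow> 'a) A) ^ (p ^ e) = (\<Sum>i\<in>A. f i ^ (p ^ e))"
  using freshmans_dream_sum'[of "p ^ e" e f A] CHAR_eq_prime[OF assms] assms(1) by simp

lemma additive_diffop_level: "\<delta> \<in> diffop_level p e \<Longrightarrow> additive \<delta>"
  unfolding diffop_level_def by unfold_locales blast

definition degree_part :: "(nat \<Rightarrow> 'a::idom set) \<Rightarrow> ('a \<Rightarrow> 'a) \<Rightarrow> int \<Rightarrow> 'a \<Rightarrow> 'a" where
  "degree_part G \<delta> a r =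
     (\<Sum>n\<in>homog_support G r. homog_compz G (int n + a) (\<delta> (homog_comp G n r)))"

lemma degree_part_superset:
  assumes gr: "graded_ring G" and add: "additive \<delta>"
    and "finite A" "homog_support G r \<subseteq> A"
  shows "degree_part G \<delta> a r = (\<Sum>n\<in>A. homog_compz G (int n + a) (\<delta> (homog_comp G n r)))"
  unfolding degree_part_def using assms(3,4)
  by (intro sum.mono_neutral_left)
     (auto simp: homog_support_def additive.zero[OF add] additive.zero[OF additive_homog_compz[OF gr]])

lemma degree_part_homogeneous:
  assumes gr: "graded_ring G" and add: "additive \<delta>" and r: "r \<in> G j"
  shows "degree_part G \<delta> a r = homog_compz G (int j + a) (\<delta> r)"
proof -
  have "homog_support G r \<subseteq> {j}"
    using homog_comp_homogeneous[OF gr r] by (auto simp: homog_support_def)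
  from degree_part_superset[OF gr add _ this] show ?thesis
    by (simp add: homog_comp_homogeneous[OF gr r])
qed

lemma degree_part_has_degree:
  assumes "graded_ring G" and "additive \<delta>"
  shows "op_has_degree G (degree_part G \<delta> a) a"
  unfolding op_has_degree_def using degree_part_homogeneous[OF assms] homog_compz_in[OF assms(1)]
  by simp

lemma additive_degree_part:
  assumes gr: "graded_ring G" and add: "additive \<delta>"
  shows "additive (degree_part G \<delta> a)"
proof
  fix r s
  define A where "A = homog_support G r \<union> homog_support G s \<union> homog_support G (r + s)"
  have fin: "finite A"
    unfolding A_def using finite_homog_support[OF gr] by blast
  have "degree_part G \<delta> a t = (\<Sum>n\<in>A. homog_compz G (int n + a) (\<delta> (homog_comp G n t)))"
    if "t \<in> {r, s, r + s}" for t
    using that by (intro degree_part_superset[OF gr add fin]) (auto simp: A_def)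
  then show "degree_part G \<delta> a (r + s) = degree_part G \<delta> a r + degree_part G \<delta> a s"
    by (simp add: additive.add[OF additive_homog_comp[OF gr]] additive.add[OF add]
        additive.add[OF additive_homog_compz[OF gr]] sum.distrib)
qed

lemma degree_part_mult_homogeneous_power:
  assumes gr: "graded_ring G" and p: "p > 0"
    and d: "\<delta> \<in> diffop_level p e" and u: "u \<in> G m"
  shows "degree_part G \<delta> a (u ^ p ^ e * s) = u ^ p ^ e * degree_part G \<delta> a s"
proof -
  let ?q = "p ^ e"
  have add: "additive \<delta>"
    using additive_diffop_level[OF d] .
  have lin: "\<delta> (r ^ ?q * v) = r ^ ?q * \<delta> v" for r v
    using d unfolding diffop_level_def by blast
  have uq: "u ^ ?q \<in> G (?q * m)"
    using graded_ring_power[OF gr u] p by simp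
  have homogeneous: "degree_part G \<delta> a (u ^ ?q * v) = u ^ ?q * degree_part G \<delta> a v"
    if v: "v \<in> G n" for v n
  proof -
    have "degree_part G \<delta> a (u ^ ?q * v) = homog_compz G (int (?q * m) + (int n + a)) (u ^ ?q * \<delta> v)"
      using degree_part_homogeneous[OF gr add graded_ring_mult[OF gr uq v]]
      by (simp add: lin add.assoc)
    also have "\<dots> = u ^ ?q * degree_part G \<delta> a v"
      using homog_compz_mult_homogeneous[OF gr uq] degree_part_homogeneous[OF gr add v] by simp
    finally show ?thesis .
  qed
  have "degree_part G \<delta> a (u ^ ?q * (\<Sum>n\<in>homog_support G s. homog_comp G n s)) =
        u ^ ?q * degree_part G \<delta> a (\<Sum>n\<in>homog_support G s. homog_comp G n s)"
    by (simp add: additive.sum[OF additive_degree_part[OF gr add]] sum_distrib_left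
        homogeneous[OF homog_comp_in[OF gr]])
  then show ?thesis
    by (simp only: sum_homog_support[OF gr])
qed

lemma degree_part_in_diffop_level:
  fixes G :: "nat \<Rightarrow> 'a::idom set"
  assumes gr: "graded_ring G" and pe: "prime p" "of_nat p = (0::'a)"
    and d: "\<delta> \<in> diffop_level p e"
  shows "degree_part G \<delta> a \<in> diffop_level p e"
proof -
  let ?q = "p ^ e"
  have add: "additive (degree_part G \<delta> a)"
    using additive_degree_part[OF gr additive_diffop_level[OF d]] .
  have "degree_part G \<delta> a (t ^ ?q * s) = t ^ ?q * degree_part G \<delta> a s" for t s
  proof -
    have "t ^ ?q = (\<Sum>n\<in>homog_support G t. homog_comp G n t) ^ ?q"
      by (simp only: sum_homog_support[OF gr])
    also have "\<dots> = (\<Sum>n\<in>homog_support G t. homog_comp G n t ^ ?q)"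
      by (rule power_prime_power_sum[OF pe])
    finally have tq: "t ^ ?q = (\<Sum>n\<in>homog_support G t. homog_comp G n t ^ ?q)" .
    show ?thesis
      by (simp only: tq sum_distrib_right additive.sum[OF add]
          degree_part_mult_homogeneous_power[OF gr prime_gt_0_nat[OF pe(1)] d homog_comp_in[OF gr]])
  qed
  then show ?thesis
    unfolding diffop_level_def using additive.add[OF add] by blast
qed

definition concentrated_above :: "(nat \<Rightarrow> 'a::idom set) \<Rightarrow> nat \<Rightarrow> 'a \<Rightarrow> bool" where
  "concentrated_above G L r \<longleftrightarrow> (\<forall>n<L. homog_comp G n r = 0)"

lemma concentrated_above_mono:
  "concentrated_above G L r \<Longrightarrow> L' \<le> L \<Longrightarrow> concentrated_above G L' r"
  unfolding concentrated_above_def by simp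

lemma concentrated_above_sum:
  "graded_ring G \<Longrightarrow> (\<And>i. i \<in> I \<Longrightarrow> concentrated_above G L (f i)) \<Longrightarrow>
   concentrated_above G L (sum f I)"
  unfolding concentrated_above_def by (simp add: additive.sum[OF additive_homog_comp])

lemma concentrated_above_mult_homogeneous:
  assumes gr: "graded_ring G" and z: "concentrated_above G L z" and w: "w \<in> G k"
  shows "concentrated_above G (L + k) (z * w)"
  using z unfolding concentrated_above_def
  by (simp add: homog_comp_mult_homogeneous[OF gr w, of _ z] mult.commute[of z w])

lemma concentrated_above_power_mult:
  assumes gr: "graded_ring G" and z: "concentrated_above G L z" and x: "x \<in> G d"
  shows "concentrated_above G (L + k * d) (z * x ^ k)"
proof (cases "k = 0")
  case False
  then show ?thesis
    using concentrated_above_mult_homogeneous[OF gr z graded_ring_power[OF gr x]] by simp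
qed (use z in simp)

lemma concentrated_above_homogeneous_eq_0:
  assumes "graded_ring G" "r \<in> G j" "concentrated_above G L r" "j < L"
  shows "r = 0"
  using assms homog_comp_homogeneous[OF assms(1,2), of j] unfolding concentrated_above_def by auto

lemma concentrated_above_diffop_homogeneous:
  fixes G :: "nat \<Rightarrow> 'a::idom set"
  assumes gr: "graded_ring G" and pe: "prime p" "of_nat p = (0::'a)"
    and no_neg: "\<forall>\<delta>\<in>diffops p. \<forall>a<0. op_has_degree G \<delta> a \<longrightarrow> \<delta> = (\<lambda>_. 0)"
    and d: "\<delta> \<in> diffop_level p e" and r: "r \<in> G j"
  shows "concentrated_above G j (\<delta> r)"
  unfolding concentrated_above_def
proof (intro allI impI)
  fix n assume "n < j"
  define a where "a = int n - int j"
  have "degree_part G \<delta> a \<in> diffops p"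
    unfolding diffops_def using degree_part_in_diffop_level[OF gr pe d] by blast
  moreover have "op_has_degree G (degree_part G \<delta> a) a"
    using degree_part_has_degree[OF gr additive_diffop_level[OF d]] .
  moreover have "a < 0"
    using \<open>n < j\<close> by (simp add: a_def)
  ultimately have "degree_part G \<delta> a = (\<lambda>_. 0)"
    using no_neg by blast
  then show "homog_comp G n (\<delta> r) = 0"
    using degree_part_homogeneous[OF gr additive_diffop_level[OF d] r, of a]
    by (simp add: a_def homog_compz_def)
qed

lemma concentrated_above_diffop:
  fixes G :: "nat \<Rightarrow> 'a::idom set"
  assumes gr: "graded_ring G" and pe: "prime p" "of_nat p = (0::'a)"
    and no_neg: "\<forall>\<delta>\<in>diffops p. \<forall>a<0. op_has_degree G \<delta> a \<longrightarrow> \<delta> = (\<lambda>_. 0)"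
    and d: "\<delta> \<in> diffop_level p e" and r: "concentrated_above G L r"
  shows "concentrated_above G L (\<delta> r)"
proof -
  have "concentrated_above G L (\<delta> (homog_comp G n r))" if "n \<in> homog_support G r" for n
  proof -
    have "L \<le> n"
      using r that unfolding concentrated_above_def homog_support_def by (meson leI mem_Collect_eq)
    then show ?thesis
      using concentrated_above_diffop_homogeneous[OF gr pe no_neg d homog_comp_in[OF gr]]
        concentrated_above_mono by blast
  qed
  then have "concentrated_above G L (\<Sum>n\<in>homog_support G r. \<delta> (homog_comp G n r))"
    by (rule concentrated_above_sum[OF gr])
  then show ?thesis
    unfolding additive.sum[OF additive_diffop_level[OF d], symmetric] sum_homog_support[OF gr] .
qed

lemma concentrated_above_diffop_sum:
  fixes G :: "nat \<Rightarrow> 'a::idom set"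
  assumes gr: "graded_ring G" and pe: "prime p" "of_nat p = (0::'a)"
    and no_neg: "\<forall>\<delta>\<in>diffops p. \<forall>a<0. op_has_degree G \<delta> a \<longrightarrow> \<delta> = (\<lambda>_. 0)"
    and x: "x \<in> G d" and \<delta>: "\<forall>i\<in>I. \<delta> i \<in> diffop_level p e" and n: "\<forall>i\<in>I. n i \<le> M"
  shows "concentrated_above G ((p ^ e - M) * d) (\<Sum>i\<in>I. \<delta> i (r i * x ^ (p ^ e - n i)))"
proof (rule concentrated_above_sum[OF gr])
  fix i assume "i \<in> I"
  have "concentrated_above G (0 + (p ^ e - n i) * d) (r i * x ^ (p ^ e - n i))"
    by (rule concentrated_above_power_mult[OF gr _ x]) (simp add: concentrated_above_def)
  moreover have "(p ^ e - M) * d \<le> 0 + (p ^ e - n i) * d"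
    using n \<open>i \<in> I\<close> by (simp add: mult_le_mono1 diff_le_mono2)
  ultimately have "concentrated_above G ((p ^ e - M) * d) (r i * x ^ (p ^ e - n i))"
    by (rule concentrated_above_mono)
  then show "concentrated_above G ((p ^ e - M) * d) (\<delta> i (r i * x ^ (p ^ e - n i)))"
    using concentrated_above_diffop[OF gr pe no_neg] \<delta> \<open>i \<in> I\<close> by blast
qed

lemma degree_bound_of_power_factorization:
  assumes gr: "graded_ring G" and x: "x \<in> G d" "x \<noteq> 0" and "q > 0"
    and z: "concentrated_above G L z" and eq: "x ^ q = z * x ^ N"
  shows "L + N * d \<le> q * d"
proof (rule ccontr)
  assume "\<not> L + N * d \<le> q * d"
  moreover have "concentrated_above G (L + N * d) (x ^ q)"
    unfolding eq by (rule concentrated_above_power_mult[OF gr z x(1)])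
  moreover have "x ^ q \<in> G (q * d)"
    using graded_ring_power[OF gr x(1) \<open>q > 0\<close>] .
  ultimately have "x ^ q = 0"
    by (meson concentrated_above_homogeneous_eq_0[OF gr] not_le)
  with \<open>x \<noteq> 0\<close> show False
    by simp
qed

lemma inverse_power_not_generated:
  fixes G :: "nat \<Rightarrow> 'a::idom set"
  assumes gr: "graded_ring G" and pe: "prime p" "of_nat p = (0::'a)"
    and no_neg: "\<forall>\<delta>\<in>diffops p. \<forall>a<0. op_has_degree G \<delta> a \<longrightarrow> \<delta> = (\<lambda>_. 0)"
    and x: "x \<in> G d" "x \<noteq> 0" "d > 0"
    and ds: "\<forall>i<length gens. ds ! i \<in> diffop_level p e"
    and M: "M = (\<Sum>i<length gens. snd (gens ! i))"
    and eq: "loc_eq x (1, Suc M)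
      ((\<Sum>i<length gens. (ds ! i) (fst (gens ! i) * x ^ (p ^ e - snd (gens ! i)))), p ^ e)"
  shows False
proof -
  have "\<forall>i\<in>{..<length gens}. snd (gens ! i) \<le> M"
    unfolding M by (auto intro: member_le_sum)
  from concentrated_above_diffop_sum[OF gr pe no_neg x(1) _ this, of "\<lambda>i. ds ! i" e]
  have "concentrated_above G ((p ^ e - M) * d)
      (\<Sum>i<length gens. (ds ! i) (fst (gens ! i) * x ^ (p ^ e - snd (gens ! i))))"
    using ds by simp
  moreover have "x ^ p ^ e =
      (\<Sum>i<length gens. (ds ! i) (fst (gens ! i) * x ^ (p ^ e - snd (gens ! i)))) * x ^ Suc M"
    using eq by (simp only: loc_eq_def fst_conv snd_conv mult_1_left)
  moreover have "p ^ e > 0"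
    using prime_gt_0_nat[OF pe(1)] by simp
  ultimately have "(p ^ e - M) * d + Suc M * d \<le> p ^ e * d"
    using degree_bound_of_power_factorization[OF gr x(1,2)] by blast
  then have "(p ^ e - M + Suc M) * d \<le> p ^ e * d"
    by (simp only: add_mult_distrib)
  then have "p ^ e - M + Suc M \<le> p ^ e"
    using \<open>d > 0\<close> mult_le_cancel2 by blast
  then show False
    by linarith
qed

theorem proposition3p2:
  fixes G :: "nat \<Rightarrow> 'a::idom set" and p :: nat and x :: 'a
  assumes "prime p" and "of_nat p = (0::'a)"
    and "graded_ring G"
    and "perfect_field_R0 p G"
    and "finite_type_over_R0 G"
    and "x \<noteq> 0" and "\<exists>d>0. x \<in> G d"
    and "loc_fg_Dmodule p x"
  shows "\<exists>\<delta>\<in>diffops p. \<delta> \<noteq> (\<lambda>_. 0) \<and> (\<exists>a<0. op_has_degree G \<delta> a)"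
proof (rule ccontr)
  assume "\<not> ?thesis"
  then have no_neg: "\<forall>\<delta>\<in>diffops p. \<forall>a<0. op_has_degree G \<delta> a \<longrightarrow> \<delta> = (\<lambda>_. 0)"
    by blast
  obtain d where x: "x \<in> G d" "d > 0"
    using assms(7) by blast
  obtain gens :: "('a \<times> nat) list" where gens: "\<forall>m :: 'a \<times> nat.
      \<exists>e ds. length ds = length gens \<and>
        (\<forall>i<length gens. ds ! i \<in> diffop_level p e \<and> snd (gens ! i) \<le> p ^ e) \<and>
        loc_eq x m ((\<Sum>i<length gens. (ds ! i) (fst (gens ! i) * x ^ (p ^ e - snd (gens ! i)))),
                    p ^ e)"
    using assms(8) unfolding loc_fg_Dmodule_def by blast
  define M where "M = (\<Sum>i<length gens. snd (gens ! i))"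
  obtain e ds where "\<forall>i<length gens. ds ! i \<in> diffop_level p e"
    and "loc_eq x (1, Suc M)
      ((\<Sum>i<length gens. (ds ! i) (fst (gens ! i) * x ^ (p ^ e - snd (gens ! i)))), p ^ e)"
    using gens[rule_format, of "(1, Suc M)"] by blast
  then show False
    using inverse_power_not_generated[OF assms(3,1,2) no_neg x(1) \<open>x \<noteq> 0\<close> x(2) _ M_def]
    by blast
qed

end
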